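(* Let $E_8$, $\alpha_0,\dots,\alpha_8$, $n_i$, $L=L(i)$, $\sigma$ be as in the context, and in the lattice vertex operator algebra $V_{\sqrt2E_8}$ with Virasoro element $\omega$ let \[\hat e=\frac1{16}\omega+\frac1{32}\sum_{\alpha\in\Phi(E_8)}e^{\sqrt2\alpha},\qquad \hat f=\sigma\hat e.\] Then \[\langle\hat e,\hat f\rangle=\begin{cases}1/4&i=0,\\ 1/32&i=1,\\ 13/2^{10}&i=2,\\ 1/2^7&i=3,\\ 3/2^9&i=4,\\ 5/2^{10}&i=5,\\ 1/2^8&i=6,\\ 0&i=7,\\ 1/2^8&i=8.\end{cases}\]
   Context: $E_8$ is the root lattice of type $E_8$ with simple roots $\alpha_1,\dots,\alpha_8$: $\langle\alpha_j,\alpha_j\rangle=2$, $\langle\alpha_j,\alpha_{j+1}\rangle=-1$ for $1\le j\le6$, $\langle\alpha_5,\alpha_8\rangle=-1$, all other pairs orthogonal. Set $\alpha_0=-(2\alpha_1+3\alpha_2+4\alpha_3+5\alpha_4+6\alpha_5+4\alpha_6+2\alpha_7+3\alpha_8)$ (minus the highest root), so $\alpha_0,\dots,\alpha_8$ form the extended $E_8$ diagram ($\alpha_0$ joined to $\alpha_1$). Let $(n_0,\dots,n_8)=(1,2,3,4,5,6,4,2,3)$. Fix $i\in\{0,\dots,8\}$ and let $L=L(i)$ be the sublattice generated by $\{\alpha_j: j\ne i\}$; then $|E_8/L|=n_i$ and $E_8=\bigcup_{j=0}^{n_i-1}(j\alpha_i+L)$. $\Phi(E_8)$ is the set of 240 roots.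 $V_{\sqrt2E_8}=M(1)\otimes\mathbb{C}[\sqrt2E_8]$ is the standard lattice vertex operator algebra (ordinary group algebra, basis $e^{\sqrt2\alpha}$), Virasoro element $\omega$, vertex operators $Y(v,z)=\sum_nv_nz^{-n-1}$. The automorphism $\sigma$ acts on $M(1)\otimes e^{\sqrt2\gamma}$, $\gamma\in j\alpha_i+L$, as multiplication by $e^{2\pi\sqrt{-1}j/n_i}$. For $u,v$ of weight $2$, $\langle u,v\rangle$ is defined by $u_3v=\langle u,v\rangle\mathbf 1$ ($\mathbf 1$ the vacuum). *)

theory Defs
  imports Complex_Main "HOL-Library.Multiset"
begin

text \<open>A vector of the lattice E8 is represented by its coordinate function with respect
  to the simple roots alpha_1,...,alpha_8 (coordinates at indices 1..8; all other
  values are 0).\<close>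

type_synonym lat = "nat \<Rightarrow> int"

definition cartan :: "nat \<Rightarrow> nat \<Rightarrow> int" where
  "cartan a b =
     (if a = b then 2
      else if (a \<le> 7 \<and> b \<le> 7 \<and> (a = b + 1 \<or> b = a + 1)) \<or> {a, b} = {5, 8} then -1
      else 0)"

definition form :: "lat \<Rightarrow> lat \<Rightarrow> int" where
  "form x y = (\<Sum>a\<in>{1..8}. \<Sum>b\<in>{1..8}. x a * cartan a b * y b)"

definition nlab :: "nat \<Rightarrow> nat" where
  "nlab i = [1, 2, 3, 4, 5, 6, 4, 2, 3] ! i"

text \<open>alpha_0, ..., alpha_8 (alpha_0 = minus the highest root).\<close>
definition sroot :: "nat \<Rightarrow> lat" where
  "sroot j = (if j = 0 then (\<lambda>k. if 1 \<le> k \<and> k \<le> 8 then - int (nlab k) else 0)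
              else (\<lambda>k. if k = j then 1 else 0))"

definition lspan :: "nat set \<Rightarrow> lat set" where
  "lspan S = {x. \<exists>c :: nat \<Rightarrow> int. x = (\<lambda>k. \<Sum>j\<in>S. c j * sroot j k)}"

definition E8 :: "lat set" where
  "E8 = lspan {1..8}"

definition Lsub :: "nat \<Rightarrow> lat set" where
  "Lsub i = lspan ({0..8} - {i})"

definition roots :: "lat set" where
  "roots = {x \<in> E8. form x x = 2}"

text \<open>The class j of gamma in E8 = union of (j alpha_i + L), 0 \<le> j < n_i.\<close>
definition cls :: "nat \<Rightarrow> lat \<Rightarrow> nat" where
  "cls i \<delta> = (SOME j. j < nlab i \<and> (\<lambda>k. \<delta> k - int j * sroot i k) \<in> Lsub i)"

text \<open>Heisenberg basis h_b = sqrt2 alpha_b (b = 1..8), so that <h_b,h_c> = 2 cartan b c.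
  M(1) is the polynomial algebra in the variables x_{k,b} = h_b(-k) (k \<ge> 1); a monomial
  is a multiset of pairs (k,b).  A vector of V is a (finitely supported) coefficient
  function on the basis  x^m \<otimes> e^{sqrt2 delta},  delta \<in> E8.\<close>

type_synonym mono = "(nat \<times> nat) multiset"
type_synonym vec = "mono \<times> lat \<Rightarrow> complex"

definition deg :: "mono \<Rightarrow> nat" where
  "deg m = sum_mset (image_mset fst m)"

definition bvec :: "mono \<Rightarrow> lat \<Rightarrow> vec" where
  "bvec m \<delta> = (\<lambda>x. if x = (m, \<delta>) then 1 else 0)"

definition vac :: vec where
  "vac = bvec {#} (\<lambda>_. 0)"

definition hmode :: "nat \<Rightarrow> int \<Rightarrow> vec \<Rightarrow> vec" where
  "hmode b n v = (\<lambda>(m, \<delta>).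
     if n < 0 then (if (nat (- n), b) \<in># m then v (m - {#(nat (- n), b)#}, \<delta>) else 0)
     else if n > 0 then
       (\<Sum>c\<in>{1..8}. of_int (2 * n * cartan b c) * of_nat (count m (nat n, c) + 1)
                      * v (m + {#(nat n, c)#}, \<delta>))
     else of_int (2 * (\<Sum>c\<in>{1..8}. cartan b c * \<delta> c)) * v (m, \<delta>))"

definition hlat :: "lat \<Rightarrow> int \<Rightarrow> vec \<Rightarrow> vec" where
  "hlat \<gamma> n v = (\<lambda>x. \<Sum>b\<in>{1..8}. of_int (\<gamma> b) * hmode b n v x)"

text \<open>For commuting operators a_1, a_2, ...: the coefficient of z^j in
  exp(sum_k a_k z^k / k), computed by  j S_j = sum_{k=1..j} a_k S_{j-k}.\<close>
function schur :: "(nat \<Rightarrow> vec \<Rightarrow> vec) \<Rightarrow> nat \<Rightarrow> vec \<Rightarrow> vec" where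
  "schur a j v = (if j = 0 then v
     else (\<lambda>x. (1 / of_nat j) * (\<Sum>k\<in>{1..j}. a k (schur a (j - k) v) x)))"
  by pat_completeness auto
termination by (relation "measure (\<lambda>(a, j, v). j)") auto

text \<open>Modes of Y(e^{sqrt2 gamma}, z) = E^-(-sqrt2 gamma, z) E^+(-sqrt2 gamma, z) e^{sqrt2 gamma}
  z^{sqrt2 gamma(0)} (ordinary group algebra, trivial cocycle): the coefficient of
  z^{-n-1}.  On x^m \<otimes> e^{sqrt2 delta} only finitely many terms contribute, all
  lying in the summation range below.\<close>
definition ev :: "lat \<Rightarrow> int \<Rightarrow> vec \<Rightarrow> vec" where
  "ev \<gamma> n v = (\<lambda>(m, \<delta>).
     let \<beta> = (\<lambda>k. \<delta> k - \<gamma> k); d = - n - 1 - 2 * form \<gamma> \<beta> in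
     (\<Sum>l\<in>{0..nat (int (deg m) + \<bar>d\<bar>)}.
        if d + int l \<ge> 0 then
          schur (\<lambda>k. hlat \<gamma> (- int k)) (nat (d + int l))
            (schur (\<lambda>k w y. - hlat \<gamma> (int k) w y) l v) (m, \<beta>)
        else 0))"

text \<open>Modes of :h_b(z) h_c(z): (the field of h_b(-1)h_c(-1)1): coefficient of z^{-n-1},
  i.e. sum over m of :h_b(m) h_c(n-1-m):.  Only the terms in the given range can be
  nonzero at a basis vector x^m' \<otimes> e^delta.\<close>
definition HH :: "nat \<Rightarrow> nat \<Rightarrow> int \<Rightarrow> vec \<Rightarrow> vec" where
  "HH b c n v = (\<lambda>x. let D = int (deg (fst x)); N = n - 1 in
     (\<Sum>m\<in>{- D - \<bar>N\<bar>..D + \<bar>N\<bar>}.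
        if m \<le> N - m then hmode b m (hmode c (N - m) v) x
        else hmode c (N - m) (hmode b m v) x))"

text \<open>Modes of dh_b(z)/dz (the field of h_b(-2)1).\<close>
definition dH :: "nat \<Rightarrow> int \<Rightarrow> vec \<Rightarrow> vec" where
  "dH b n v = (\<lambda>x. - of_int n * hmode b (n - 1) v x)"

text \<open>The vertex operator Y(u,z) = sum_n u_n z^{-n-1} for u in the weight-2 subspace V_2,
  which has basis h_b(-1)h_c(-1)1 (b \<le> c), h_b(-2)1, and e^{sqrt2 alpha} (alpha a root);
  Y is extended linearly.\<close>
definition Y2 :: "vec \<Rightarrow> int \<Rightarrow> vec \<Rightarrow> vec" where
  "Y2 u n v = (\<lambda>x.
      (\<Sum>b\<in>{1..8}. \<Sum>c\<in>{b..8}. u ({#(1, b), (1, c)#}, \<lambda>_. 0) * HH b c n v x)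
    + (\<Sum>b\<in>{1..8}. u ({#(2, b)#}, \<lambda>_. 0) * dH b n v x)
    + (\<Sum>\<alpha>\<in>roots. u ({#}, \<alpha>) * ev \<alpha> n v x))"

definition gdual :: "nat \<Rightarrow> nat \<Rightarrow> real" where
  "gdual = (THE M. (\<forall>a\<in>{1..8}. \<forall>c\<in>{1..8}.
                  (\<Sum>b\<in>{1..8}. real_of_int (2 * cartan a b) * M b c) = (if a = c then 1 else 0))
              \<and> (\<forall>a c. a \<notin> {1..8} \<or> c \<notin> {1..8} \<longrightarrow> M a c = 0))"

definition omega :: vec where
  "omega = (\<lambda>x. \<Sum>b\<in>{1..8}. \<Sum>c\<in>{1..8}.
              of_real (gdual b c / 2) * bvec {#(1, b), (1, c)#} (\<lambda>_. 0) x)"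

definition sigma :: "nat \<Rightarrow> vec \<Rightarrow> vec" where
  "sigma i v = (\<lambda>(m, \<delta>).
     exp (2 * of_real pi * \<i> * of_nat (cls i \<delta>) / of_nat (nlab i)) * v (m, \<delta>))"

definition ehat :: vec where
  "ehat = (\<lambda>x. omega x / 16 + (\<Sum>\<alpha>\<in>roots. bvec {#} \<alpha> x) / 32)"

end

theory Submission
  imports Defs "HOL-Library.Function_Algebras"
begin

text \<open>
  The inner product is the vacuum coefficient of e_3 f. Write e = omega/16 + (1/32) sum_alpha
  e^(sqrt2 alpha); sigma fixes omega and multiplies e^(sqrt2 alpha) by zeta^cls(alpha), where
  zeta = exp(2 pi i / n_i). Heisenberg modes and the modes of the lattice vertex operators shift
  the M(1)-degree in a controlled way, and counting degrees shows that e_3 f is a multiple of the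
  vacuum: the omega-omega term contributes <omega, omega>/256 = (c/2)/256 = 1/64, the mixed terms
  vanish, and among the root terms only the pairs (alpha, -alpha) survive, contributing
  (1/1024) sum_alpha zeta^cls(alpha). The class of alpha is its i-th simple-root coordinate
  modulo n_i. Enumerating the 240 roots in the standard coordinates D8 + {0, (1/2,...,1/2)}
  counts the roots in each class, and relations between roots of unity of order at most 6
  evaluate the sum.
\<close>

section \<open>The root system of E8\<close>

lemma set_1_8: "{1..8::nat} = {1, 2, 3, 4, 5, 6, 7, 8}"
  by auto

lemma form_explicit:
  "form x y =
     2 * x 1 * y 1 - x 1 * y 2 - x 2 * y 1 + 2 * x 2 * y 2 - x 2 * y 3 - x 3 * y 2
   + 2 * x 3 * y 3 - x 3 * y 4 - x 4 * y 3 + 2 * x 4 * y 4 - x 4 * y 5 - x 5 * y 4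
   + 2 * x 5 * y 5 - x 5 * y 6 - x 5 * y 8 - x 6 * y 5 + 2 * x 6 * y 6 - x 6 * y 7
   - x 7 * y 6 + 2 * x 7 * y 7 - x 8 * y 5 + 2 * x 8 * y 8"
  unfolding form_def set_1_8 by (simp add: cartan_def doubleton_eq_iff algebra_simps)

lemma mem_E8_iff: "x \<in> E8 \<longleftrightarrow> (\<forall>k. k \<notin> {1..8} \<longrightarrow> x k = 0)"
proof
  assume "x \<in> E8"
  then obtain c where "x = (\<lambda>k. \<Sum>j\<in>{1..8}. c j * sroot j k)"
    unfolding E8_def lspan_def by auto
  then show "\<forall>k. k \<notin> {1..8} \<longrightarrow> x k = 0"
    by (auto simp: sroot_def)
next
  assume supp: "\<forall>k. k \<notin> {1..8} \<longrightarrow> x k = 0"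
  have "x k = (\<Sum>j\<in>{1..8}. x j * sroot j k)" for k
  proof -
    have "(\<Sum>j\<in>{1..8}. x j * sroot j k) = (\<Sum>j\<in>{1..8}. if j = k then x k else 0)"
      by (rule sum.cong) (auto simp: sroot_def)
    then show ?thesis
      using supp by (cases "k \<in> {1..8}") auto
  qed
  then show "x \<in> E8"
    unfolding E8_def lspan_def by blast
qed

lemma form_uminus_right: "form x (- y) = - form x y"
  by (simp add: form_explicit)

lemma form_zero_right: "form x 0 = 0"
  by (simp add: form_explicit)

lemma zero_notin_roots: "0 \<notin> roots"
  by (simp add: roots_def form_explicit)

lemma uminus_in_roots: "\<alpha> \<in> roots \<Longrightarrow> - \<alpha> \<in> roots"
  by (auto simp: roots_def mem_E8_iff form_explicit)

definition sumsq :: "int list \<Rightarrow> int" where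
  "sumsq u = sum_list (map (\<lambda>a. a * a) u)"

lemma sumsq_simps [simp]: "sumsq [] = 0" "sumsq (a # u) = a * a + sumsq u"
  by (simp_all add: sumsq_def)

lemma sumsq_nonneg: "0 \<le> sumsq u"
  by (induction u) auto

lemma sumsq_eq_0_iff: "sumsq u = 0 \<longleftrightarrow> (\<forall>a\<in>set u. a = 0)"
  by (induction u) (auto simp: add_nonneg_eq_0_iff sumsq_nonneg)

lemma sumsq_signs: "set u \<subseteq> {-1, 1} \<Longrightarrow> sumsq u = int (length u)"
  by (induction u) auto

lemma sumsq_double: "sumsq (map (\<lambda>a. 2 * a) u) = 4 * sumsq u"
  by (induction u) auto

text \<open>Twice the coordinates of a lattice vector in the standard model
  \<open>D\<^sub>8 \<union> (D\<^sub>8 + (1/2,\<dots>,1/2))\<close> of \<open>E\<^sub>8\<close> in \<open>\<real>\<^sup>8\<close>,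
  in which the form is the Euclidean inner product.\<close>

definition doubled_coords :: "lat \<Rightarrow> int list" where
  "doubled_coords x =
     [2 * (x 8 - x 6) + x 7, 2 * (x 6 - x 5 + x 8) - x 7, 2 * (x 5 - x 4) - x 7,
      2 * (x 4 - x 3) - x 7, 2 * (x 3 - x 2) - x 7, 2 * (x 2 - x 1) - x 7, 2 * x 1 - x 7, x 7]"

definition of_doubled_coords :: "int list \<Rightarrow> lat" where
  "of_doubled_coords w = (\<lambda>k.
      if k = 1 then (w!6 + w!7) div 2
      else if k = 2 then (w!5 + w!6 + 2 * w!7) div 2
      else if k = 3 then (w!4 + w!5 + w!6 + 3 * w!7) div 2
      else if k = 4 then (w!3 + w!4 + w!5 + w!6 + 4 * w!7) div 2
      else if k = 5 then (w!2 + w!3 + w!4 + w!5 + w!6 + 5 * w!7) div 2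
      else if k = 6 then (- w!0 + w!1 + w!2 + w!3 + w!4 + w!5 + w!6 + 7 * w!7) div 4
      else if k = 7 then w!7
      else if k = 8 then (w!0 + w!1 + w!2 + w!3 + w!4 + w!5 + w!6 + 5 * w!7) div 4
      else 0)"

lemma four_form_eq_sumsq: "4 * form x x = sumsq (doubled_coords x)"
  by (simp add: form_explicit doubled_coords_def algebra_simps)

lemma of_doubled_coords_in_E8: "of_doubled_coords w \<in> E8"
  by (auto simp: mem_E8_iff of_doubled_coords_def)

lemma of_doubled_coords_inverse:
  assumes "x \<in> E8"
  shows "of_doubled_coords (doubled_coords x) = x"
proof
  fix k :: nat
  consider "k = 1" | "k = 2" | "k = 3" | "k = 4" | "k = 5" | "k = 6" | "k = 7" | "k = 8"
    | "k \<notin> {1..8}"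
    by fastforce
  then show "of_doubled_coords (doubled_coords x) k = x k"
  proof cases
    case 9
    then show ?thesis
      using assms by (auto simp: mem_E8_iff of_doubled_coords_def)
  qed (simp_all add: of_doubled_coords_def doubled_coords_def)
qed

lemma E8_posdef:
  assumes "x \<in> E8" "form x x \<le> 0"
  shows "x = 0"
proof -
  have "sumsq (doubled_coords x) = 0"
    using four_form_eq_sumsq[of x] assms(2) sumsq_nonneg[of "doubled_coords x"] by linarith
  then have "\<forall>a\<in>set (doubled_coords x). a = 0"
    using sumsq_eq_0_iff by blast
  moreover have "length (doubled_coords x) = 8"
    by (simp add: doubled_coords_def)
  ultimately have "doubled_coords x ! k = 0" if "k < 8" for k
    using that by (metis nth_mem)
  then have "of_doubled_coords (doubled_coords x) = 0"
    by (auto simp: of_doubled_coords_def)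
  then show ?thesis
    using of_doubled_coords_inverse[OF assms(1)] by simp
qed

lemma roots_form_le_neg2_imp_opposite:
  assumes "\<alpha> \<in> roots" "\<beta> \<in> roots" "form \<alpha> \<beta> \<le> -2"
  shows "\<beta> = - \<alpha>"
proof -
  have "\<alpha> + \<beta> \<in> E8"
    using assms by (auto simp: roots_def mem_E8_iff)
  moreover have "form (\<alpha> + \<beta>) (\<alpha> + \<beta>) = form \<alpha> \<alpha> + 2 * form \<alpha> \<beta> + form \<beta> \<beta>"
    by (simp add: form_explicit algebra_simps)
  then have "form (\<alpha> + \<beta>) (\<alpha> + \<beta>) \<le> 0"
    using assms by (simp add: roots_def)
  ultimately have "\<alpha> + \<beta> = 0"
    by (rule E8_posdef)
  then show ?thesis
    by (simp add: eq_neg_iff_add_eq_0 add.commute)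
qed

fun vectors_of_sumsq :: "nat \<Rightarrow> int \<Rightarrow> int list list" where
  "vectors_of_sumsq 0 s = (if s = 0 then [[]] else [])"
| "vectors_of_sumsq (Suc n) s =
     concat (map (\<lambda>a. map (Cons a) (vectors_of_sumsq n (s - a * a))) [-s..s])"

fun sign_vectors :: "nat \<Rightarrow> int list list" where
  "sign_vectors 0 = [[]]"
| "sign_vectors (Suc n) = map (Cons (-1)) (sign_vectors n) @ map (Cons 1) (sign_vectors n)"

lemma abs_le_square: "\<bar>a\<bar> \<le> a * (a::int)"
proof (cases "a = 0")
  case False
  then have "\<bar>a\<bar> * 1 \<le> \<bar>a\<bar> * \<bar>a\<bar>"
    by (intro mult_left_mono) auto
  then show ?thesis
    by (simp add: abs_mult_self_eq)
qed simp

lemma set_vectors_of_sumsq: "set (vectors_of_sumsq n s) = {u. length u = n \<and> sumsq u = s}"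
proof (induction n arbitrary: s)
  case (Suc n)
  have "u \<in> set (vectors_of_sumsq (Suc n) s)" if "length u = Suc n" "sumsq u = s" for u
  proof -
    obtain a u' where u: "u = a # u'" "length u' = n"
      using \<open>length u = Suc n\<close> by (cases u) auto
    have "\<bar>a\<bar> \<le> s"
      using abs_le_square[of a] sumsq_nonneg[of u'] that u by auto
    then show ?thesis
      using Suc that u by force
  qed
  then show ?case
    using Suc by auto
qed auto

lemma set_sign_vectors: "set (sign_vectors n) = {u. length u = n \<and> set u \<subseteq> {-1, 1}}"
proof (induction n)
  case (Suc n)
  have "u \<in> set (sign_vectors (Suc n))" if "length u = Suc n" "set u \<subseteq> {-1, 1}" for u
    using that Suc by (cases u) auto
  then show ?case
    using Suc by auto
qed auto

lemma odd_sumsq_eq_length_imp_signs: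
  assumes "\<forall>a\<in>set u. odd a" "sumsq u = int (length u)"
  shows "set u \<subseteq> {-1, 1}"
proof -
  have odd_square: "1 \<le> a * a" if "odd a" for a :: int
    using abs_le_square[of a] that by (cases "a = 0") auto
  have length_le_sumsq: "int (length v) \<le> sumsq v" if "\<forall>a\<in>set v. odd a" for v
    using that odd_square by (induction v) fastforce+
  show ?thesis
    using assms
  proof (induction u)
    case (Cons a u)
    have "1 \<le> a * a" "int (length u) \<le> sumsq u"
      using Cons.prems odd_square length_le_sumsq by auto
    then have "a * a = 1" "sumsq u = int (length u)"
      using Cons.prems(2) by auto
    then show ?case
      using Cons square_eq_1_iff[of a] by auto
  qed simp
qed

text \<open>The doubled coordinates of a root are either \<open>\<pm>2e\<^sub>i \<pm> 2e\<^sub>j\<close> or a vector of signs,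
  according to the parity of \<open>x 7\<close>; the filter keeps the candidates that come from \<open>E\<^sub>8\<close>.\<close>

definition root_coords :: "int list list" where
  "root_coords = filter (\<lambda>w. doubled_coords (of_doubled_coords w) = w)
     (map (map (\<lambda>a. 2 * a)) (vectors_of_sumsq 8 2) @ sign_vectors 8)"

lemma doubled_coords_root_in_root_coords:
  assumes "\<alpha> \<in> roots"
  shows "doubled_coords \<alpha> \<in> set root_coords"
proof -
  define w where "w = doubled_coords \<alpha>"
  have "\<alpha> \<in> E8" and sq: "sumsq w = 8"
    using assms four_form_eq_sumsq[of \<alpha>] by (auto simp: roots_def w_def)
  have len: "length w = 8"
    by (simp add: w_def doubled_coords_def)
  have parity: "\<forall>a\<in>set w. even a \<longleftrightarrow> even (\<alpha> 7)"
    by (simp add: w_def doubled_coords_def)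
  have "w \<in> set (map (map (\<lambda>a. 2 * a)) (vectors_of_sumsq 8 2) @ sign_vectors 8)"
  proof (cases "even (\<alpha> 7)")
    case True
    define u where "u = map (\<lambda>a. a div 2) w"
    have w_eq: "w = map (\<lambda>a. 2 * a) u"
      using parity True unfolding u_def by (induction w) auto
    then have "u \<in> set (vectors_of_sumsq 8 2)"
      using sq len sumsq_double[of u] by (simp add: set_vectors_of_sumsq)
    then show ?thesis
      using w_eq by auto
  next
    case False
    then have "set w \<subseteq> {-1, 1}"
      using odd_sumsq_eq_length_imp_signs[of w] parity sq len by simp
    then show ?thesis
      using len by (simp add: set_sign_vectors)
  qed
  moreover have "doubled_coords (of_doubled_coords w) = w"
    using of_doubled_coords_inverse[OF \<open>\<alpha> \<in> E8\<close>] by (simp add: w_def)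
  ultimately show ?thesis
    by (simp add: root_coords_def w_def)
qed

lemma distinct_concat_map_Cons:
  "distinct xs \<Longrightarrow> (\<forall>x\<in>set xs. distinct (f x)) \<Longrightarrow>
    distinct (concat (map (\<lambda>x. map (Cons x) (f x)) xs))"
  by (induction xs) (auto simp: distinct_map)

lemma distinct_vectors_of_sumsq: "distinct (vectors_of_sumsq n s)"
  by (induction n arbitrary: s) (auto intro: distinct_concat_map_Cons)

lemma distinct_sign_vectors: "distinct (sign_vectors n)"
  by (induction n) (auto simp: distinct_map)

lemma distinct_root_coords: "distinct root_coords"
proof -
  have "hd u \<in> {-1, 1}" if "u \<in> set (sign_vectors 8)" for u
  proof -
    have "length u = 8" "set u \<subseteq> {-1, 1}"
      using that by (simp_all add: set_sign_vectors)
    then show ?thesis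
      by (cases u) auto
  qed
  moreover have "even (hd u)" if u: "u \<in> set (map (map (\<lambda>a. 2 * a)) (vectors_of_sumsq 8 2))" for u
  proof -
    obtain v where "u = map (\<lambda>a. 2 * a) v" "length v = 8"
      using u by (auto simp: set_vectors_of_sumsq)
    then show ?thesis
      by (cases v) auto
  qed
  ultimately have "set (map (map (\<lambda>a. 2 * a)) (vectors_of_sumsq 8 2)) \<inter> set (sign_vectors 8) = {}"
    by fastforce
  moreover have "inj (map (\<lambda>a. 2 * (a::int)))"
    by (auto intro: inj_mapI inj_onI)
  ultimately show ?thesis
    unfolding root_coords_def
    by (intro distinct_filter) (simp add: distinct_map distinct_vectors_of_sumsq distinct_sign_vectors
        inj_on_subset[of _ UNIV])
qed

lemma doubled_coords_of_root_coords:
  "w \<in> set root_coords \<Longrightarrow> doubled_coords (of_doubled_coords w) = w"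
  unfolding root_coords_def by (simp only: set_filter mem_Collect_eq)

lemma sumsq_root_coords: "w \<in> set root_coords \<Longrightarrow> sumsq w = 8"
  by (auto simp: root_coords_def set_vectors_of_sumsq set_sign_vectors sumsq_double sumsq_signs)

lemma roots_eq_image_root_coords: "roots = of_doubled_coords ` set root_coords"
proof
  show "roots \<subseteq> of_doubled_coords ` set root_coords"
    using doubled_coords_root_in_root_coords of_doubled_coords_inverse
    by (force simp: roots_def)
  show "of_doubled_coords ` set root_coords \<subseteq> roots"
  proof
    fix x assume "x \<in> of_doubled_coords ` set root_coords"
    then obtain w where w: "w \<in> set root_coords" "x = of_doubled_coords w"
      by auto
    then have "doubled_coords x = w"
      by (simp add: doubled_coords_of_root_coords)
    then have "4 * form x x = 8"
      using w sumsq_root_coords four_form_eq_sumsq[of x] by simp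
    then show "x \<in> roots"
      using of_doubled_coords_in_E8 w(2) by (simp add: roots_def)
  qed
qed

lemma sum_roots_eq_sum_list:
  "(\<Sum>\<alpha>\<in>roots. f \<alpha>) = sum_list (map (\<lambda>w. f (of_doubled_coords w)) root_coords)"
proof -
  have "inj_on of_doubled_coords (set root_coords)"
    by (rule inj_onI) (metis doubled_coords_of_root_coords)
  then show ?thesis
    unfolding roots_eq_image_root_coords
    by (simp add: sum.reindex distinct_root_coords sum_list_distinct_conv_sum_set)
qed

lemma finite_roots: "finite roots"
  by (simp add: roots_eq_image_root_coords)

section \<open>Classes modulo L(i) and the character sum\<close>

lemma nlab_pos: "i \<le> 8 \<Longrightarrow> 0 < nlab i"
  by (auto simp: nlab_def less_Suc_eq_le[symmetric] less_Suc_eq nth_Cons')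

lemma Lsub_coord_dvd:
  assumes "i \<in> {1..8}" "y \<in> Lsub i"
  shows "int (nlab i) dvd y i"
proof -
  obtain c where c: "y = (\<lambda>k. \<Sum>j\<in>{0..8} - {i}. c j * sroot j k)"
    using assms(2) unfolding Lsub_def lspan_def by auto
  have "y i = (\<Sum>j\<in>{0..8} - {i}. if j = 0 then c 0 * - int (nlab i) else 0)"
    unfolding c by (rule sum.cong) (use assms(1) in \<open>auto simp: sroot_def\<close>)
  also have "\<dots> = c 0 * - int (nlab i)"
    using assms(1) by (simp add: sum.delta)
  finally show ?thesis
    by simp
qed

lemma shift_in_Lsub:
  assumes "i \<in> {1..8}" "\<delta> \<in> E8" "int (nlab i) dvd \<delta> i - int j"
  shows "(\<lambda>k. \<delta> k - int j * sroot i k) \<in> Lsub i"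
proof -
  obtain t where t: "\<delta> i - int j = int (nlab i) * t"
    using assms(3) by (auto simp: dvd_def)
  define c where "c l = (if l = 0 then - t else \<delta> l - t * int (nlab l))" for l
  have "\<delta> k - int j * sroot i k = (\<Sum>l\<in>{0..8} - {i}. c l * sroot l k)" for k
  proof -
    have "{0..8} - {i} = insert 0 ({1..8} - {i})"
      using assms(1) by auto
    moreover have "(\<Sum>l\<in>{1..8} - {i}. c l * sroot l k) = (\<Sum>l\<in>{1..8} - {i}. if l = k then c k else 0)"
      by (rule sum.cong) (auto simp: sroot_def)
    ultimately have sum_eq: "(\<Sum>l\<in>{0..8} - {i}. c l * sroot l k) =
        c 0 * sroot 0 k + (if k \<in> {1..8} - {i} then c k else 0)"
      by simp
    show ?thesis
      unfolding sum_eq using assms(1,2) t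
      by (cases "k = i"; cases "k \<in> {1..8}") (auto simp: sroot_def c_def mem_E8_iff algebra_simps)
  qed
  then show ?thesis
    unfolding Lsub_def lspan_def by blast
qed

lemma cls_eq_mod:
  assumes "i \<le> 8" "\<delta> \<in> E8"
  shows "cls i \<delta> = nat (\<delta> i mod int (nlab i))"
proof (cases "i = 0")
  case True
  have "{0..8} - {0} = {1..8::nat}"
    by auto
  then have "Lsub 0 = E8"
    by (simp add: Lsub_def E8_def)
  moreover have "\<delta> 0 = 0"
    using assms(2) by (simp add: mem_E8_iff)
  ultimately show ?thesis
    using True assms(2) unfolding cls_def by (intro some_equality) (auto simp: nlab_def)
next
  case False
  then have i: "i \<in> {1..8}"
    using assms(1) by simp
  let ?j = "nat (\<delta> i mod int (nlab i))"
  have n: "0 < nlab i"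
    using assms(1) by (rule nlab_pos)
  have "int (nlab i) dvd \<delta> i - int ?j"
    using n by (simp add: mod_eq_dvd_iff[symmetric])
  from shift_in_Lsub[OF i assms(2) this]
  have "?j < nlab i \<and> (\<lambda>k. \<delta> k - int ?j * sroot i k) \<in> Lsub i"
    using n by (simp add: nat_less_iff)
  moreover have "j = ?j" if "j < nlab i" "(\<lambda>k. \<delta> k - int j * sroot i k) \<in> Lsub i" for j
  proof -
    have "int (nlab i) dvd \<delta> i - int j"
      using Lsub_coord_dvd[OF i that(2)] i by (simp add: sroot_def)
    then have "\<delta> i mod int (nlab i) = int j"
      using that(1) by (simp add: mod_eq_dvd_iff[symmetric])
    then show ?thesis
      by simp
  qed
  ultimately show ?thesis
    unfolding cls_def by (intro some_equality) blast+
qed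

definition zeta :: "nat \<Rightarrow> complex" where
  "zeta n = exp (2 * of_real pi * \<i> / of_nat n)"

lemma exp_eq_zeta_power: "exp (2 * of_real pi * \<i> * of_nat k / of_nat n) = zeta n ^ k"
  unfolding zeta_def exp_of_nat_mult[symmetric] by (simp add: field_simps)

lemma zeta_mult_power: "0 < d \<Longrightarrow> zeta (d * m) ^ d = zeta m"
  unfolding exp_eq_zeta_power[symmetric] by (cases "m = 0") (simp_all add: zeta_def)

lemma zeta_neq_1:
  assumes "1 < n"
  shows "zeta n \<noteq> 1"
proof
  assume "zeta n = 1"
  then have "Re (exp (2 * of_real pi * \<i> / of_nat n)) = 1"
    by (simp add: zeta_def)
  then have "cos (2 * pi / n) = 1"
    by (simp add: Re_exp)
  then obtain k :: int where "2 * pi / n = 2 * pi * k"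
    by (auto simp: cos_one_2pi_int)
  then have "2 * pi * (1 / real n) = 2 * pi * k"
    by simp
  then have "1 / real n = k"
    using pi_gt_zero by (subst (asm) mult_left_cancel) auto
  moreover have "0 < 1 / real n" "1 / real n < 1"
    using assms by auto
  ultimately show False
    by simp
qed

lemma sum_zeta_powers: "1 < n \<Longrightarrow> (\<Sum>k<n. zeta n ^ k) = 0"
  using zeta_neq_1 zeta_mult_power[of n 1] by (simp add: sum_gp_strict zeta_def)

lemma zeta_relations:
  "zeta 2 = -1"
  "zeta 3 ^ 2 = -1 - zeta 3"
  "zeta 4 ^ 2 = -1" "zeta 4 ^ 3 = - zeta 4"
  "zeta 5 ^ 4 = -1 - zeta 5 - zeta 5 ^ 2 - zeta 5 ^ 3"
  "zeta 6 ^ 2 = zeta 6 - 1" "zeta 6 ^ 3 = -1" "zeta 6 ^ 4 = - zeta 6" "zeta 6 ^ 5 = 1 - zeta 6"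
proof -
  have sum2: "1 + zeta 2 = 0" and sum3: "1 + zeta 3 + zeta 3 ^ 2 = 0"
    and sum5: "1 + zeta 5 + zeta 5 ^ 2 + zeta 5 ^ 3 + zeta 5 ^ 4 = 0"
    using sum_zeta_powers[of 2] sum_zeta_powers[of 3] sum_zeta_powers[of 5]
    by (simp_all add: lessThan_nat_numeral add_ac)
  show z2: "zeta 2 = -1"
    using sum2 by (simp add: eq_neg_iff_add_eq_0 add.commute)
  show z3: "zeta 3 ^ 2 = -1 - zeta 3"
    using sum3 by (simp add: algebra_simps eq_neg_iff_add_eq_0)
  show "zeta 5 ^ 4 = -1 - zeta 5 - zeta 5 ^ 2 - zeta 5 ^ 3"
    using sum5 by (simp add: algebra_simps eq_neg_iff_add_eq_0)
  show z4: "zeta 4 ^ 2 = -1"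
    using zeta_mult_power[of 2 2] z2 by simp
  then show "zeta 4 ^ 3 = - zeta 4"
    by (simp add: power_Suc2[of _ 2, simplified])
  show z6: "zeta 6 ^ 3 = -1"
    using zeta_mult_power[of 3 2] z2 by simp
  then show z6_4: "zeta 6 ^ 4 = - zeta 6"
    by (simp add: power_Suc2[of _ 3, simplified])
  have "- zeta 6 = (zeta 6 ^ 2) ^ 2"
    using z6_4 by (simp flip: power_mult)
  also have "\<dots> = -1 - zeta 6 ^ 2"
    using z3 zeta_mult_power[of 2 3] by simp
  finally show z6_2: "zeta 6 ^ 2 = zeta 6 - 1"
    by (simp add: algebra_simps)
  show "zeta 6 ^ 5 = 1 - zeta 6"
    using z6 z6_2 power_add[of "zeta 6" 3 2] by (simp add: algebra_simps)
qed

definition phase_sum :: "nat \<Rightarrow> complex" where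
  "phase_sum i = (\<Sum>\<alpha>\<in>roots. exp (2 * of_real pi * \<i> * of_nat (cls i \<alpha>) / of_nat (nlab i)))"

definition residue_counts :: "nat \<Rightarrow> nat list" where
  "residue_counts i = map (\<lambda>k. length (filter (\<lambda>w. nat (of_doubled_coords w i mod int (nlab i)) = k)
     root_coords)) [0..<nlab i]"

lemma sum_list_map_by_values:
  fixes g :: "nat \<Rightarrow> 'a :: comm_semiring_1"
  assumes "\<forall>x\<in>set xs. e x < n"
  shows "sum_list (map (\<lambda>x. g (e x)) xs) = (\<Sum>k<n. of_nat (length (filter (\<lambda>x. e x = k) xs)) * g k)"
  using assms
proof (induction xs)
  case (Cons x xs)
  have "(\<Sum>k<n. of_nat (length (filter (\<lambda>y. e y = k) (x # xs))) * g k) =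
      (\<Sum>k<n. if e x = k then g k else 0) + (\<Sum>k<n. of_nat (length (filter (\<lambda>y. e y = k) xs)) * g k)"
  proof -
    have "of_nat (length (filter (\<lambda>y. e y = k) (x # xs))) * g k =
        (if e x = k then g k else 0) + of_nat (length (filter (\<lambda>y. e y = k) xs)) * g k" for k
      by (simp add: algebra_simps)
    then show ?thesis
      by (simp add: sum.distrib)
  qed
  also have "(\<Sum>k<n. if e x = k then g k else 0) = g (e x)"
    using Cons.prems by simp
  finally show ?case
    using Cons by simp
qed simp

lemma phase_sum_eq:
  assumes "i \<le> 8"
  shows "phase_sum i = (\<Sum>k<nlab i. of_nat (residue_counts i ! k) * zeta (nlab i) ^ k)"
proof -
  let ?r = "\<lambda>w. nat (of_doubled_coords w i mod int (nlab i))"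
  have n: "0 < nlab i"
    using assms by (rule nlab_pos)
  have "phase_sum i = sum_list (map (\<lambda>w. zeta (nlab i) ^ ?r w) root_coords)"
    unfolding phase_sum_def sum_roots_eq_sum_list
    by (simp add: cls_eq_mod[OF assms of_doubled_coords_in_E8] exp_eq_zeta_power)
  also have "\<dots> = (\<Sum>k<nlab i. of_nat (length (filter (\<lambda>w. ?r w = k) root_coords)) * zeta (nlab i) ^ k)"
    using n by (intro sum_list_map_by_values) (simp add: nat_less_iff)
  finally show ?thesis
    by (simp add: residue_counts_def)
qed

lemma residue_counts_values:
  assumes "i \<le> 8"
  shows "residue_counts i =
    [[240], [128, 112], [78, 81, 81], [52, 64, 60, 64], [40, 50, 50, 50, 50],
     [38, 36, 45, 40, 45, 36], [58, 56, 70, 56], [112, 128], [72, 84, 84]] ! i"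
proof -
  have "map residue_counts [0..<9] =
      [[240], [128, 112], [78, 81, 81], [52, 64, 60, 64], [40, 50, 50, 50, 50],
       [38, 36, 45, 40, 45, 36], [58, 56, 70, 56], [112, 128], [72, 84, 84]]"
    unfolding residue_counts_def by code_simp
  from arg_cong[OF this, of "\<lambda>xs. xs ! i"] show ?thesis
    using assms by (simp del: upt_Suc)
qed

lemma phase_sum_values:
  assumes "i \<le> 8"
  shows "phase_sum i = of_int ([240, 16, -3, -8, -10, -11, -12, -16, -12] ! i)"
proof -
  have "i \<in> {0, 1, 2, 3, 4, 5, 6, 7, 8}"
    using assms by auto
  then show ?thesis
    using phase_sum_eq[OF assms] residue_counts_values[OF assms]
    by (auto simp: nlab_def lessThan_nat_numeral zeta_relations algebra_simps)
qed

section \<open>Degree bookkeeping in the lattice vertex operator algebra\<close>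

text \<open>Monomials containing a pair \<open>(0, b)\<close>, which is not a variable \<open>h\<^sub>b(-k)\<close>, are excluded.\<close>

definition proper_mono :: "mono \<Rightarrow> bool" where
  "proper_mono m \<longleftrightarrow> (\<forall>a\<in>#m. 0 < fst a)"

definition homogeneous_at :: "lat \<Rightarrow> int \<Rightarrow> vec \<Rightarrow> bool" where
  "homogeneous_at \<beta> D v \<longleftrightarrow> (\<forall>m. v (m, \<beta>) \<noteq> 0 \<longrightarrow> int (deg m) = D \<and> proper_mono m)"

lemma deg_simps [simp]: "deg {#} = 0" "deg (add_mset a m) = fst a + deg m"
  by (simp_all add: deg_def)

lemma proper_mono_simps [simp]:
  "proper_mono {#}" "proper_mono (add_mset a m) \<longleftrightarrow> 0 < fst a \<and> proper_mono m"
  by (auto simp: proper_mono_def)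

lemma proper_mono_deg_0: "proper_mono m \<Longrightarrow> deg m = 0 \<Longrightarrow> m = {#}"
  by (cases m) auto

lemma homogeneous_at_negative_degree: "homogeneous_at \<beta> D v \<Longrightarrow> D < 0 \<Longrightarrow> v (m, \<beta>) = 0"
  by (auto simp: homogeneous_at_def)

lemma homogeneous_at_scale:
  "homogeneous_at \<beta> D v \<Longrightarrow> homogeneous_at \<beta> D (\<lambda>x. c * v x)"
  by (simp add: homogeneous_at_def)

lemma homogeneous_at_sum:
  assumes "\<And>x. I x \<subseteq> J" "\<And>j. j \<in> J \<Longrightarrow> homogeneous_at \<beta> D (f j)"
  shows "homogeneous_at \<beta> D (\<lambda>x. \<Sum>j\<in>I x. f j x)"
  unfolding homogeneous_at_def
proof (intro allI impI)
  fix m assume "(\<Sum>j\<in>I (m, \<beta>). f j (m, \<beta>)) \<noteq> 0"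
  then obtain j where "j \<in> I (m, \<beta>)" "f j (m, \<beta>) \<noteq> 0"
    by (rule sum.not_neutral_contains_not_neutral)
  then show "int (deg m) = D \<and> proper_mono m"
    using assms(1)[of "(m, \<beta>)"] assms(2)[of j] unfolding homogeneous_at_def by blast
qed

lemma homogeneous_at_hmode:
  assumes "homogeneous_at \<beta> D v"
  shows "homogeneous_at \<beta> (D - n) (hmode b n v)"
  unfolding homogeneous_at_def
proof (intro allI impI)
  fix m assume nonzero: "hmode b n v (m, \<beta>) \<noteq> 0"
  have hom: "int (deg m') = D \<and> proper_mono m'" if "v (m', \<beta>) \<noteq> 0" for m'
    using assms that by (auto simp: homogeneous_at_def)
  consider "n < 0" | "n > 0" | "n = 0"
    by linarith
  then show "int (deg m) = D - n \<and> proper_mono m"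
  proof cases
    case 1
    let ?a = "(nat (- n), b)"
    from nonzero 1 have "?a \<in># m" "v (m - {#?a#}, \<beta>) \<noteq> 0"
      by (auto simp: hmode_def split: if_splits)
    then show ?thesis
      using 1 hom[of "m - {#?a#}"] by (auto dest!: multi_member_split)
  next
    case 2
    from nonzero 2 have "(\<Sum>c\<in>{1..8}. of_int (2 * n * cartan b c) * of_nat (count m (nat n, c) + 1)
        * v (m + {#(nat n, c)#}, \<beta>)) \<noteq> 0"
      by (simp add: hmode_def)
    then obtain c where "v (m + {#(nat n, c)#}, \<beta>) \<noteq> 0"
      by (rule sum.not_neutral_contains_not_neutral) auto
    then show ?thesis
      using 2 hom by fastforce
  next
    case 3
    then show ?thesis
      using nonzero hom by (simp add: hmode_def)
  qed
qed

lemma homogeneous_at_hlat: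
  "homogeneous_at \<beta> D v \<Longrightarrow> homogeneous_at \<beta> (D - n) (hlat \<gamma> n v)"
  unfolding hlat_def
  by (intro homogeneous_at_sum[where J = UNIV] homogeneous_at_scale homogeneous_at_hmode) auto

(* The defining equation of schur is not a terminating simp rule. *)
declare schur.simps [simp del]

lemma homogeneous_at_schur:
  assumes step: "\<And>k w D. homogeneous_at \<beta> D w \<Longrightarrow> homogeneous_at \<beta> (D + s * int k) (a k w)"
    and "homogeneous_at \<beta> D v"
  shows "homogeneous_at \<beta> (D + s * int j) (schur a j v)"
proof (induction j rule: less_induct)
  case (less j)
  show ?case
  proof (cases "j = 0")
    case True
    then show ?thesis
      using assms(2) by (simp add: schur.simps[of a 0])
  next
    case False
    have "homogeneous_at \<beta> (D + s * int j) (a k (schur a (j - k) v))" if "k \<in> {1..j}" for k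
    proof -
      have "homogeneous_at \<beta> (D + s * int (j - k)) (schur a (j - k) v)"
        using that by (intro less.IH) auto
      then have "homogeneous_at \<beta> (D + s * int (j - k) + s * int k) (a k (schur a (j - k) v))"
        by (rule step)
      then show ?thesis
        using that by (simp add: algebra_simps of_nat_diff)
    qed
    then have "homogeneous_at \<beta> (D + s * int j) (\<lambda>x. \<Sum>k\<in>{1..j}. a k (schur a (j - k) v) x)"
      by (intro homogeneous_at_sum) auto
    then have "homogeneous_at \<beta> (D + s * int j)
        (\<lambda>x. (1 / of_nat j) * (\<Sum>k\<in>{1..j}. a k (schur a (j - k) v) x))"
      by (rule homogeneous_at_scale)
    then show ?thesis
      using False by (subst schur.simps) simp
  qed
qed

lemma homogeneous_at_ev:
  assumes "homogeneous_at (\<delta> - \<gamma>) D v"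
  shows "homogeneous_at \<delta> (D - n - 1 - 2 * form \<gamma> (\<delta> - \<gamma>)) (ev \<gamma> n v)"
  unfolding homogeneous_at_def
proof (intro allI impI)
  fix m assume "ev \<gamma> n v (m, \<delta>) \<noteq> 0"
  let ?d = "- n - 1 - 2 * form \<gamma> (\<delta> - \<gamma>)"
  let ?S = "\<lambda>l. schur (\<lambda>k. hlat \<gamma> (- int k)) (nat (?d + int l))
      (schur (\<lambda>k w y. - hlat \<gamma> (int k) w y) l v) (m, \<delta> - \<gamma>)"
  have "(\<Sum>l\<in>{0..nat (int (deg m) + \<bar>?d\<bar>)}. if 0 \<le> ?d + int l then ?S l else 0) \<noteq> 0"
    using \<open>ev \<gamma> n v (m, \<delta>) \<noteq> 0\<close> by (simp only: ev_def Let_def prod.case fun_diff_def not_False_eq_True)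
  then obtain l where summand: "(if 0 \<le> ?d + int l then ?S l else 0) \<noteq> 0"
    by (rule sum.not_neutral_contains_not_neutral)
  then have l: "0 \<le> ?d + int l"
    by (auto split: if_splits)
  with summand have nonzero: "?S l \<noteq> 0"
    by simp
  have annihilation: "homogeneous_at \<beta> (D' + (-1) * int k) (\<lambda>y. - hlat \<gamma> (int k) w y)"
    if "homogeneous_at \<beta> D' w" for \<beta> D' k w
    using homogeneous_at_hlat[OF that, of "int k" \<gamma>] by (simp add: homogeneous_at_def)
  have creation: "homogeneous_at \<beta> (D' + 1 * int k) (hlat \<gamma> (- int k) w)"
    if "homogeneous_at \<beta> D' w" for \<beta> D' k w
    using homogeneous_at_hlat[OF that, of "- int k" \<gamma>] by simp
  have inner: "homogeneous_at (\<delta> - \<gamma>) (D + (-1) * int l) (schur (\<lambda>k w y. - hlat \<gamma> (int k) w y) l v)"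
    using annihilation assms by (rule homogeneous_at_schur)
  have "homogeneous_at (\<delta> - \<gamma>) (D + (-1) * int l + 1 * int (nat (?d + int l)))
      (schur (\<lambda>k. hlat \<gamma> (- int k)) (nat (?d + int l)) (schur (\<lambda>k w y. - hlat \<gamma> (int k) w y) l v))"
    using creation inner by (rule homogeneous_at_schur)
  then show "int (deg m) = D - n - 1 - 2 * form \<gamma> (\<delta> - \<gamma>) \<and> proper_mono m"
    using nonzero l by (auto simp: homogeneous_at_def)
qed

lemma homogeneous_at_HH:
  assumes "homogeneous_at \<delta> D v"
  shows "homogeneous_at \<delta> (D - (n - 1)) (HH b c n v)"
  unfolding HH_def Let_def
proof (intro homogeneous_at_sum[where J = UNIV])
  fix k
  have "homogeneous_at \<delta> (D - (n - 1 - k) - k) (hmode b k (hmode c (n - 1 - k) v))"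
    "homogeneous_at \<delta> (D - k - (n - 1 - k)) (hmode c (n - 1 - k) (hmode b k v))"
    by (intro homogeneous_at_hmode assms)+
  then show "homogeneous_at \<delta> (D - (n - 1)) (\<lambda>x. if k \<le> n - 1 - k
      then hmode b k (hmode c (n - 1 - k) v) x else hmode c (n - 1 - k) (hmode b k v) x)"
    by (cases "k \<le> n - 1 - k") (simp_all add: algebra_simps)
qed simp

section \<open>The vectors omega and ehat\<close>

lemma double_sum_delta:
  assumes "finite S" "d \<in> S" "e \<in> S"
  shows "(\<Sum>b\<in>S. \<Sum>c\<in>S. if b = d \<and> c = e then f b c else 0) = f d e"
proof -
  have "(\<Sum>c\<in>S. if b = d \<and> c = e then f b c else 0) = (if b = d then f b e else 0)" for b
    using assms by (cases "b = d") (simp_all add: sum.delta')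
  then show ?thesis
    using assms by (simp add: sum.delta')
qed

lemma double_sum_delta_unordered:
  assumes "finite S" "d \<in> S" "e \<in> S"
  shows "(\<Sum>b\<in>S. \<Sum>c\<in>S. if (b = d \<and> c = e) \<or> (b = e \<and> c = d) then f b c else 0) =
    (if d = e then f d d else f d e + f e d)"
proof (cases "d = e")
  case True
  then show ?thesis
    using double_sum_delta[OF assms, of f] by simp
next
  case False
  then have "(if (b = d \<and> c = e) \<or> (b = e \<and> c = d) then f b c else 0) =
      (if b = d \<and> c = e then f b c else 0) + (if b = e \<and> c = d then f b c else 0)" for b c
    by auto
  then show ?thesis
    using False assms by (simp add: sum.distrib double_sum_delta)
qed

lemma add_mset_pair_eq: "{#a, b#} = {#c, d#} \<longleftrightarrow> (a = c \<and> b = d) \<or> (a = d \<and> b = c)"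
  by (auto simp: add_eq_conv_ex)

definition inverse_cartan :: "int list list" where
  "inverse_cartan =
     [[2, 3, 4, 5, 6, 4, 2, 3], [3, 6, 8, 10, 12, 8, 4, 6], [4, 8, 12, 15, 18, 12, 6, 9],
      [5, 10, 15, 20, 24, 16, 8, 12], [6, 12, 18, 24, 30, 20, 10, 15], [4, 8, 12, 16, 20, 14, 7, 10],
      [2, 4, 6, 8, 10, 7, 4, 5], [3, 6, 9, 12, 15, 10, 5, 8]]"

definition gram_dual :: "nat \<Rightarrow> nat \<Rightarrow> real" where
  "gram_dual b c =
     (if b \<in> {1..8} \<and> c \<in> {1..8} then of_int (inverse_cartan ! (b - 1) ! (c - 1)) / 2 else 0)"

lemma gram_dual_sym: "gram_dual a b = gram_dual b a"
proof -
  have "\<forall>a\<in>{1..8}. \<forall>b\<in>{1..8}. inverse_cartan ! (a - 1) ! (b - 1) = inverse_cartan ! (b - 1) ! (a - 1)"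
    unfolding set_1_8 inverse_cartan_def by simp
  then show ?thesis
    by (auto simp: gram_dual_def)
qed

lemma cartan_sym: "cartan a b = cartan b a"
  by (auto simp: cartan_def insert_commute)

lemma cartan_gram_dual:
  "\<forall>a\<in>{1..8}. \<forall>c\<in>{1..8}.
    (\<Sum>b\<in>{1..8}. of_int (2 * cartan a b) * gram_dual b c) = (if a = c then 1 else 0)"
  unfolding gram_dual_def set_1_8 by (simp add: cartan_def doubleton_eq_iff inverse_cartan_def)

lemma gram_dual_cartan:
  assumes "a \<in> {1..8}" "c \<in> {1..8}"
  shows "(\<Sum>b\<in>{1..8}. gram_dual a b * of_int (2 * cartan b c)) = (if a = c then 1 else 0)"
proof -
  have "(\<Sum>b\<in>{1..8}. gram_dual a b * of_int (2 * cartan b c)) =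
      (\<Sum>b\<in>{1..8}. of_int (2 * cartan c b) * gram_dual b a)"
    by (rule sum.cong) (auto simp: gram_dual_sym cartan_sym)
  then show ?thesis
    using cartan_gram_dual assms by auto
qed

lemma gdual_eq_gram_dual: "gdual = gram_dual"
  unfolding gdual_def
proof (rule the_equality)
  fix M :: "nat \<Rightarrow> nat \<Rightarrow> real"
  assume M: "(\<forall>a\<in>{1..8}. \<forall>c\<in>{1..8}.
      (\<Sum>b\<in>{1..8}. of_int (2 * cartan a b) * M b c) = (if a = c then 1 else 0))
    \<and> (\<forall>a c. a \<notin> {1..8} \<or> c \<notin> {1..8} \<longrightarrow> M a c = 0)"
  show "M = gram_dual"
  proof (intro ext)
    fix a c
    show "M a c = gram_dual a c"
    proof (cases "a \<in> {1..8} \<and> c \<in> {1..8}")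
      case True
      have M_right_inverse: "(\<Sum>b\<in>{1..8}. of_int (2 * cartan e b) * M b c) = (if e = c then 1 else 0)"
        if "e \<in> {1..8}" for e
        using M True that by blast
      have "gram_dual a c = (\<Sum>e\<in>{1..8}. gram_dual a e * (if e = c then 1 else 0))"
        using True by (simp add: if_distrib sum.delta cong: if_cong)
      also have "\<dots> = (\<Sum>e\<in>{1..8}. gram_dual a e * (\<Sum>b\<in>{1..8}. of_int (2 * cartan e b) * M b c))"
        using M_right_inverse by simp
      also have "\<dots> = (\<Sum>b\<in>{1..8}. (\<Sum>e\<in>{1..8}. gram_dual a e * of_int (2 * cartan e b)) * M b c)"
        by (simp add: sum_distrib_left sum_distrib_right mult.assoc) (rule sum.swap)
      also have "\<dots> = (\<Sum>b\<in>{1..8}. if a = b then M b c else 0)"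
        using True by (intro sum.cong refl) (subst gram_dual_cartan, auto)
      also have "\<dots> = M a c"
        using True by (simp add: sum.delta)
      finally show ?thesis
        by simp
    qed (use M in \<open>auto simp: gram_dual_def\<close>)
  qed
qed (use cartan_gram_dual in \<open>auto simp: gram_dual_def\<close>)

lemma omega_apply:
  "omega (m, \<beta>) =
     (\<Sum>b\<in>{1..8}. \<Sum>c\<in>{1..8}. if (m, \<beta>) = ({#(1, b), (1, c)#}, 0) then of_real (gram_dual b c / 2) else 0)"
  unfolding omega_def bvec_def gdual_eq_gram_dual zero_fun_def by (intro sum.cong refl) auto

lemma omega_support: "omega (m, \<beta>) \<noteq> 0 \<Longrightarrow> \<beta> = 0 \<and> (\<exists>b c. m = {#(1, b), (1, c)#})"
  unfolding omega_apply by (fastforce elim!: sum.not_neutral_contains_not_neutral split: if_splits)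

lemma omega_quadratic:
  assumes "d \<in> {1..8}" "e \<in> {1..8}"
  shows "omega ({#(1, d), (1, e)#}, 0) = of_real (if d = e then gram_dual d d / 2 else gram_dual d e)"
proof -
  let ?f = "\<lambda>b c. of_real (gram_dual b c / 2) :: complex"
  have "omega ({#(1, d), (1, e)#}, 0) =
      (\<Sum>b\<in>{1..8}. \<Sum>c\<in>{1..8}. if (b = d \<and> c = e) \<or> (b = e \<and> c = d) then ?f b c else 0)"
    unfolding omega_apply by (simp add: add_mset_pair_eq disj_commute eq_commute)
  also have "\<dots> = (if d = e then ?f d d else ?f d e + ?f e d)"
    using assms by (intro double_sum_delta_unordered) auto
  finally show ?thesis
    by (auto simp: gram_dual_sym[of e d] simp flip: of_real_add)
qed

lemma ehat_apply:
  "ehat (m, \<beta>) = omega (m, \<beta>) / 16 + (if m = {#} \<and> \<beta> \<in> roots then 1 / 32 else 0)"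
proof -
  have "(\<Sum>\<alpha>\<in>roots. bvec {#} \<alpha> (m, \<beta>)) = (\<Sum>\<alpha>\<in>roots. if \<alpha> = \<beta> then (if m = {#} then 1 else 0) else 0)"
    by (intro sum.cong) (auto simp: bvec_def)
  then show ?thesis
    by (simp add: ehat_def finite_roots sum.delta')
qed

lemma sigma_ehat_support:
  assumes "sigma i ehat (m, \<beta>) \<noteq> 0"
  shows "(\<beta> = 0 \<and> (\<exists>b c. m = {#(1, b), (1, c)#})) \<or> (\<beta> \<in> roots \<and> m = {#})"
proof -
  have "ehat (m, \<beta>) \<noteq> 0"
    using assms by (auto simp: sigma_def)
  then show ?thesis
    using omega_support by (auto simp: ehat_apply split: if_splits)
qed

lemma homogeneous_at_sigma_ehat:
  "homogeneous_at 0 2 (sigma i ehat)"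
  "\<beta> \<noteq> 0 \<Longrightarrow> homogeneous_at \<beta> 0 (sigma i ehat)"
  "\<beta> \<noteq> 0 \<Longrightarrow> \<beta> \<notin> roots \<Longrightarrow> homogeneous_at \<beta> D (sigma i ehat)"
  unfolding homogeneous_at_def using sigma_ehat_support zero_notin_roots by fastforce+

lemma ehat_dH_coefficient: "ehat ({#(2, b)#}, 0) = 0"
  using omega_support[of "{#(2, b)#}" 0] by (auto simp: ehat_apply)

lemma Y2_sigma_ehat_off_vacuum:
  assumes "x \<noteq> ({#}, 0)"
  shows "Y2 ehat 3 (sigma i ehat) x = 0"
proof -
  obtain m \<delta> where x: "x = (m, \<delta>)"
    by (cases x)
  have "HH b c 3 (sigma i ehat) x = 0" for b c
  proof (cases "\<delta> = 0")
    case True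
    then have "homogeneous_at \<delta> 0 (HH b c 3 (sigma i ehat))"
      using homogeneous_at_HH[OF homogeneous_at_sigma_ehat(1), where n = 3] by simp
    then show ?thesis
      using assms x True proper_mono_deg_0 by (force simp: homogeneous_at_def)
  next
    case False
    then have "homogeneous_at \<delta> (- 2) (HH b c 3 (sigma i ehat))"
      using homogeneous_at_HH[OF homogeneous_at_sigma_ehat(2), where n = 3] by simp
    then show ?thesis
      unfolding x by (rule homogeneous_at_negative_degree) simp
  qed
  moreover have "ev \<alpha> 3 (sigma i ehat) x = 0" if \<alpha>: "\<alpha> \<in> roots" for \<alpha>
  proof -
    consider "\<delta> - \<alpha> = 0" | "\<delta> - \<alpha> \<in> roots" | "\<delta> - \<alpha> \<noteq> 0" "\<delta> - \<alpha> \<notin> roots"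
      by blast
    then show ?thesis
    proof cases
      case 1
      then show ?thesis
        using homogeneous_at_ev[of \<delta> \<alpha> 2 "sigma i ehat" 3] homogeneous_at_sigma_ehat(1) x
        by (simp add: form_zero_right homogeneous_at_negative_degree)
    next
      case 2
      text \<open>Only the pairing of opposite roots reaches degree 0, at the vacuum.\<close>
      have hom: "homogeneous_at \<delta> (- 4 - 2 * form \<alpha> (\<delta> - \<alpha>)) (ev \<alpha> 3 (sigma i ehat))"
        using homogeneous_at_ev[of \<delta> \<alpha> 0 "sigma i ehat" 3] homogeneous_at_sigma_ehat(2) 2 zero_notin_roots
        by force
      show ?thesis
      proof (rule ccontr)
        assume nonzero: "ev \<alpha> 3 (sigma i ehat) x \<noteq> 0"
        then have "form \<alpha> (\<delta> - \<alpha>) \<le> -2"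
          using hom x by (auto simp: homogeneous_at_def)
        then have "\<delta> - \<alpha> = - \<alpha>"
          using roots_form_le_neg2_imp_opposite \<alpha> 2 by blast
        then have "\<delta> = 0" "form \<alpha> (\<delta> - \<alpha>) = -2"
          using \<alpha> by (auto simp: form_uminus_right roots_def)
        then show False
          using hom nonzero x assms proper_mono_deg_0 by (force simp: homogeneous_at_def)
      qed
    next
      case 3
      let ?D = "int (deg m) + 5 + 2 * form \<alpha> (\<delta> - \<alpha>)"
      have "homogeneous_at \<delta> (?D - 3 - 1 - 2 * form \<alpha> (\<delta> - \<alpha>)) (ev \<alpha> 3 (sigma i ehat))"
        using 3 by (intro homogeneous_at_ev homogeneous_at_sigma_ehat(3))
      then show ?thesis
        unfolding x homogeneous_at_def by force
    qed
  qed
  ultimately show ?thesis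
    unfolding Y2_def by (simp add: ehat_dH_coefficient flip: zero_fun_def)
qed

section \<open>The vacuum coefficient\<close>

lemma sigma_at_zero: "i \<le> 8 \<Longrightarrow> sigma i v (m, 0) = v (m, 0)"
  using cls_eq_mod[of i 0] by (simp add: sigma_def mem_E8_iff)

lemma hmode_1_apply:
  "hmode b 1 v (m, \<beta>) =
     (\<Sum>c\<in>{1..8}. of_int (2 * cartan b c) * of_nat (count m (1, c) + 1) * v (add_mset (1, c) m, \<beta>))"
  by (simp add: hmode_def)

lemma hmode_negative_at_empty: "n < 0 \<Longrightarrow> hmode b n v ({#}, \<beta>) = 0"
  by (simp add: hmode_def)

lemma hmode_0_at_zero: "hmode b 0 v (m, 0) = 0"
  by (simp add: hmode_def)

lemma hmode_1_sigma_ehat: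
  assumes "i \<le> 8" "c \<in> {1..8}" "d \<in> {1..8}"
  shows "hmode c 1 (sigma i ehat) ({#(1, d)#}, 0) = (if c = d then 1 / 16 else 0)"
proof -
  have "hmode c 1 (sigma i ehat) ({#(1, d)#}, 0) =
      (\<Sum>e\<in>{1..8}. of_real (of_int (2 * cartan c e) * gram_dual e d) / 16)"
    unfolding hmode_1_apply
  proof (intro sum.cong refl)
    fix e :: nat assume "e \<in> {1..8}"
    then have quadratic_coefficient: "sigma i ehat ({#(1, e), (1, d)#}, 0) = of_real (if e = d then gram_dual e e / 2 else gram_dual e d) / 16"
      using assms omega_quadratic[of e d] zero_notin_roots by (simp add: sigma_at_zero ehat_apply)
    then show "of_int (2 * cartan c e) * of_nat (count {#(1, d)#} (1, e) + 1)
        * sigma i ehat (add_mset (1, e) {#(1, d)#}, 0) = of_real (of_int (2 * cartan c e) * gram_dual e d) / 16"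
      unfolding quadratic_coefficient by (cases "e = d") auto
  qed
  also have "\<dots> = of_real (\<Sum>e\<in>{1..8}. of_int (2 * cartan c e) * gram_dual e d) / 16"
    by (simp only: of_real_sum sum_divide_distrib)
  also have "\<dots> = (if c = d then 1 / 16 else 0)"
    using cartan_gram_dual assms(2,3) by simp
  finally show ?thesis .
qed

lemma hmode_1_hmode_1_sigma_ehat:
  assumes "i \<le> 8" "b \<in> {1..8}" "c \<in> {1..8}"
  shows "hmode b 1 (hmode c 1 (sigma i ehat)) ({#}, 0) = of_int (cartan b c) / 8"
proof -
  have "hmode b 1 (hmode c 1 (sigma i ehat)) ({#}, 0) =
      (\<Sum>d\<in>{1..8}. if d = c then of_int (2 * cartan b c) / 16 else 0)"
    unfolding hmode_1_apply[of b] by (intro sum.cong refl) (simp only: hmode_1_sigma_ehat[OF assms(1,3)], auto)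
  then show ?thesis
    using assms(3) by simp
qed

lemma HH_3_vacuum: "HH b c 3 v ({#}, 0) = hmode b 1 (hmode c 1 v) ({#}, 0)"
proof -
  have "{-2..2::int} = {-2, -1, 0, 1, 2}"
    by auto
  then show ?thesis
    unfolding HH_def Let_def by (simp add: hmode_negative_at_empty hmode_0_at_zero)
qed

lemma HH_part_vacuum:
  assumes "i \<le> 8"
  shows "(\<Sum>b\<in>{1..8}. \<Sum>c\<in>{b..8}. ehat ({#(1, b), (1, c)#}, 0) * HH b c 3 (sigma i ehat) ({#}, 0)) = 1 / 64"
proof -
  have "(\<Sum>b\<in>{1..8}. \<Sum>c\<in>{b..8}. ehat ({#(1, b), (1, c)#}, 0) * HH b c 3 (sigma i ehat) ({#}, 0)) =
      of_real (\<Sum>b\<in>{1..8}. \<Sum>c\<in>{b..8}.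
        (if b = c then gram_dual b b / 2 else gram_dual b c) * of_int (cartan b c) / 128)"
    unfolding of_real_sum
  proof (intro sum.cong refl)
    fix b c :: nat assume b: "b \<in> {1..8}" and "c \<in> {b..8}"
    then have c: "c \<in> {1..8}"
      by simp
    show "ehat ({#(1, b), (1, c)#}, 0) * HH b c 3 (sigma i ehat) ({#}, 0) =
        of_real ((if b = c then gram_dual b b / 2 else gram_dual b c) * of_int (cartan b c) / 128)"
      unfolding HH_3_vacuum hmode_1_hmode_1_sigma_ehat[OF assms b c] ehat_apply omega_quadratic[OF b c]
      using zero_notin_roots by simp
  qed
  also have "\<dots> = 1 / 64"
  proof -
    have "{Suc 0..8} = {1, 2, 3, 4, 5, 6, 7, 8}" "{2..8::nat} = {2, 3, 4, 5, 6, 7, 8}"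
      "{3..8::nat} = {3, 4, 5, 6, 7, 8}" "{4..8::nat} = {4, 5, 6, 7, 8}" "{5..8::nat} = {5, 6, 7, 8}"
      "{6..8::nat} = {6, 7, 8}" "{7..8::nat} = {7, 8}"
      by auto
    then show ?thesis
      by (simp add: set_1_8 gram_dual_def cartan_def doubleton_eq_iff inverse_cartan_def)
  qed
  finally show ?thesis .
qed

lemma ev_3_vacuum:
  assumes "\<alpha> \<in> roots"
  shows "ev \<alpha> 3 v ({#}, 0) = v ({#}, - \<alpha>)"
proof -
  have "form \<alpha> (- \<alpha>) = -2"
    using assms by (simp add: form_uminus_right roots_def)
  then show ?thesis
    by (simp add: ev_def schur.simps fun_Compl_def)
qed

lemma ehat_at_root: "\<alpha> \<in> roots \<Longrightarrow> ehat ({#}, \<alpha>) = 1 / 32"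
  using omega_support[of "{#}" \<alpha>] by (auto simp: ehat_apply)

lemma ev_part_vacuum:
  assumes "i \<le> 8"
  shows "(\<Sum>\<alpha>\<in>roots. ehat ({#}, \<alpha>) * ev \<alpha> 3 (sigma i ehat) ({#}, 0)) = phase_sum i / 1024"
proof -
  let ?phase = "\<lambda>\<alpha>. exp (2 * of_real pi * \<i> * of_nat (cls i \<alpha>) / of_nat (nlab i))"
  have "(\<Sum>\<alpha>\<in>roots. ehat ({#}, \<alpha>) * ev \<alpha> 3 (sigma i ehat) ({#}, 0)) = (\<Sum>\<alpha>\<in>roots. ?phase (- \<alpha>) / 1024)"
    by (intro sum.cong refl)
      (simp add: ev_3_vacuum sigma_def ehat_at_root uminus_in_roots)
  also have "\<dots> = (\<Sum>\<alpha>\<in>roots. ?phase \<alpha> / 1024)"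
    by (rule sum.reindex_bij_witness[of _ uminus uminus]) (auto simp: uminus_in_roots)
  finally show ?thesis
    by (simp add: phase_sum_def sum_divide_distrib)
qed

lemma Y2_sigma_ehat_at_vacuum:
  assumes "i \<le> 8"
  shows "Y2 ehat 3 (sigma i ehat) ({#}, 0) = 1 / 64 + phase_sum i / 1024"
proof -
  have "Y2 ehat 3 (sigma i ehat) ({#}, 0) =
      (\<Sum>b\<in>{1..8}. \<Sum>c\<in>{b..8}. ehat ({#(1, b), (1, c)#}, 0) * HH b c 3 (sigma i ehat) ({#}, 0))
    + (\<Sum>b\<in>{1..8}. ehat ({#(2, b)#}, 0) * dH b 3 (sigma i ehat) ({#}, 0))
    + (\<Sum>\<alpha>\<in>roots. ehat ({#}, \<alpha>) * ev \<alpha> 3 (sigma i ehat) ({#}, 0))"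
    unfolding Y2_def zero_fun_def by (rule refl)
  also have "\<dots> = 1 / 64 + phase_sum i / 1024"
    unfolding HH_part_vacuum[OF assms] ev_part_vacuum[OF assms] ehat_dH_coefficient by simp
  finally show ?thesis .
qed

lemma vac_apply: "vac x = (if x = ({#}, 0) then 1 else 0)"
  by (simp add: vac_def bvec_def zero_fun_def)

lemma inner_product_value:
  assumes "i \<le> 8"
  shows "1 / 64 + phase_sum i / 1024 =
    complex_of_real ([1/4, 1/32, 13/2^10, 1/2^7, 3/2^9, 5/2^10, 1/2^8, 0, 1/2^8] ! i)"
proof -
  have "i \<in> {0, 1, 2, 3, 4, 5, 6, 7, 8}"
    using assms by auto
  then show ?thesis
    using phase_sum_values[OF assms] by auto
qed

theorem mainTheorem6:
  fixes i :: nat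
  assumes "i \<le> 8"
  shows "Y2 ehat 3 (sigma i ehat) =
    (\<lambda>x. of_real ([1/4, 1/32, 13/2^10, 1/2^7, 3/2^9, 5/2^10, 1/2^8, 0, 1/2^8] ! i) * vac x)"
proof
  fix x
  show "Y2 ehat 3 (sigma i ehat) x =
      of_real ([1/4, 1/32, 13/2^10, 1/2^7, 3/2^9, 5/2^10, 1/2^8, 0, 1/2^8] ! i) * vac x"
  proof (cases "x = ({#}, 0)")
    case True
    then show ?thesis
      using Y2_sigma_ehat_at_vacuum[OF assms] inner_product_value[OF assms] by (simp add: vac_apply)
  next
    case False
    then show ?thesis
      using Y2_sigma_ehat_off_vacuum by (simp add: vac_apply)
  qed
qed

end
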